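(* For $1\le k\le n-1$, the random variable $U_k-1$ has a hypergeometric distribution with parameters $n-1$ (population size), $k-1$ (number of marked elements) and $n-k-1$ (number of draws), i.e. $\mathbf P(U_k-1=j)=\binom{k-1}{j}\binom{n-k}{n-k-1-j}\big/\binom{n-1}{n-k-1}$.
   Context: Urn process: let $n\ge2$. An urn initially contains $n$ black balls. It is emptied in $n$ steps: in each of the first $n-1$ steps a uniformly random pair of balls is removed from the urn and replaced by one red ball; in step $n$ the last remaining ball is removed. $U_k$ is the number of red balls in the urn after $k$ steps, $0\le k\le n$. *)

theory Defs
  imports "HOL-Probability.Probability"
begin

text \<open>Urn state: (number of black balls, number of red balls).
  The balls are labelled 0 ..< b + r; labels below b are black, the others red.\<close>

definition urn_pairs :: "nat \<Rightarrow> nat set set" where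
  "urn_pairs m = {S. S \<subseteq> {0..<m} \<and> card S = 2}"

definition urn_step :: "nat \<times> nat \<Rightarrow> (nat \<times> nat) pmf" where
  "urn_step s = (case s of (b, r) \<Rightarrow>
     if b + r \<ge> 2 then
       map_pmf (\<lambda>S. (b - card (S \<inter> {..<b}), r - card (S - {..<b}) + 1))
               (pmf_of_set (urn_pairs (b + r)))
     else return_pmf (0, 0))"

fun urn_state :: "nat \<Rightarrow> nat \<Rightarrow> (nat \<times> nat) pmf" where
  "urn_state n 0 = return_pmf (n, 0)"
| "urn_state n (Suc k) = bind_pmf (urn_state n k) urn_step"

definition urn_U :: "nat \<Rightarrow> nat \<Rightarrow> nat pmf" where
  "urn_U n k = map_pmf snd (urn_state n k)"

end

theory Submission
  imports Defs
begin

(* The red count U_k is a Markov chain: from r red balls among m = n - k balls, one step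
   draws a uniformly random pair, whose number t of black balls is hypergeometric,
   P(t) = C(m - r, t) C(r, 2 - t) / C(m, 2), and the new red count is r + t - 1.
   We show by induction on k that
       P(U_k = s) = C(k - 1, s - 1) C(n - k, s) / C(n - 1, k)      (s >= 1),
   and P(U_k = 0) = 0.  For the induction step the forward equation of the chain has to be
   checked; after multiplying out, all three contributions share the factor
   s (m - s) C(m, s), and the identity collapses to Pascal's rule applied twice:
   C(a + 2, s) = C(a, s) + 2 C(a, s - 1) + C(a, s - 2). *)

lemma card_subsets_meeting:
  assumes fin: "finite A" "finite B" and disj: "A \<inter> B = {}" and "t \<le> q"
  shows "card {S. S \<subseteq> A \<union> B \<and> card S = q \<and> card (S \<inter> A) = t}
         = (card A choose t) * (card B choose (q - t))"
proof -
  let ?X = "{X. X \<subseteq> A \<and> card X = t}" and ?Y = "{Y. Y \<subseteq> B \<and> card Y = q - t}"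
  have split: "{S. S \<subseteq> A \<union> B \<and> card S = q \<and> card (S \<inter> A) = t}
      = (\<lambda>(X, Y). X \<union> Y) ` (?X \<times> ?Y)"
  proof (intro set_eqI iffI)
    fix S assume S: "S \<in> {S. S \<subseteq> A \<union> B \<and> card S = q \<and> card (S \<inter> A) = t}"
    then have "S = (S \<inter> A) \<union> (S \<inter> B)" and "finite S"
      using fin finite_subset by auto
    then have "card S = card (S \<inter> A) + card (S \<inter> B)"
      using card_Un_disjoint[of "S \<inter> A" "S \<inter> B"] disj by auto
    with S show "S \<in> (\<lambda>(X, Y). X \<union> Y) ` (?X \<times> ?Y)"
      by (intro image_eqI[where x = "(S \<inter> A, S \<inter> B)"]) auto
  next
    fix S assume "S \<in> (\<lambda>(X, Y). X \<union> Y) ` (?X \<times> ?Y)"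
    then obtain X Y where S: "S = X \<union> Y" and X: "X \<subseteq> A" "card X = t"
      and Y: "Y \<subseteq> B" "card Y = q - t" by auto
    have "finite X" "finite Y" "X \<inter> Y = {}" using X Y fin disj finite_subset by auto
    then have "card S = q" using S X Y \<open>t \<le> q\<close> by (simp add: card_Un_disjoint)
    moreover have "S \<inter> A = X" using S X Y disj by auto
    ultimately show "S \<in> {S. S \<subseteq> A \<union> B \<and> card S = q \<and> card (S \<inter> A) = t}"
      using S X Y by auto
  qed
  have "inj_on (\<lambda>(X, Y). X \<union> Y) (?X \<times> ?Y)"
  proof (rule inj_onI, clarify)
    fix X Y X' Y' assume "X \<subseteq> A" "Y \<subseteq> B" "X' \<subseteq> A" "Y' \<subseteq> B" "X \<union> Y = X' \<union> Y'"
    then show "X = X' \<and> Y = Y'" using disj by blast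
  qed
  then show ?thesis
    unfolding split using fin by (simp add: card_image card_cartesian_product n_subsets)
qed

lemma subsets_of_size:
  shows "finite {S. S \<subseteq> {0..<m} \<and> card S = q}"
    and "card {S. S \<subseteq> {0..<m} \<and> card S = q} = m choose q"
    and "q \<le> m \<Longrightarrow> {S. S \<subseteq> {0..<m} \<and> card S = q} \<noteq> {}"
proof -
  show "finite {S. S \<subseteq> {0..<m} \<and> card S = q}"
    by (rule finite_subset[of _ "Pow {0..<m}"]) auto
  show card: "card {S. S \<subseteq> {0..<m} \<and> card S = q} = m choose q"
    using n_subsets[of "{0..<m}" q] by simp
  show "q \<le> m \<Longrightarrow> {S. S \<subseteq> {0..<m} \<and> card S = q} \<noteq> {}"
    using card zero_less_binomial[of q m] by force
qed

lemma pmf_hypergeometric: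
  assumes "q \<le> b + r" and "t \<le> q"
  shows "pmf (map_pmf (\<lambda>S. card (S \<inter> {..<b})) (pmf_of_set {S. S \<subseteq> {0..<b + r} \<and> card S = q})) t
         = real ((b choose t) * (r choose (q - t))) / real ((b + r) choose q)"
proof -
  let ?P = "{S. S \<subseteq> {0..<b + r} \<and> card S = q}"
  have ne: "?P \<noteq> {}" using subsets_of_size(3)[OF assms(1)] .
  have fin: "finite ?P" and card_P: "card ?P = (b + r) choose q"
    using subsets_of_size(1,2) .
  have "{0..<b + r} = {..<b} \<union> {b..<b + r}" by auto
  then have "?P \<inter> (\<lambda>S. card (S \<inter> {..<b})) -` {t}
      = {S. S \<subseteq> {..<b} \<union> {b..<b + r} \<and> card S = q \<and> card (S \<inter> {..<b}) = t}"
    by auto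
  also have "card \<dots> = (b choose t) * (r choose (q - t))"
    by (rule card_subsets_meeting[of "{..<b}" "{b..<b + r}" t q, simplified])
       (auto simp: \<open>t \<le> q\<close>)
  finally show ?thesis
    using ne fin by (simp add: pmf_map measure_pmf_of_set card_P)
qed

definition black_drawn :: "nat \<Rightarrow> nat \<Rightarrow> nat pmf" where
  "black_drawn b r = map_pmf (\<lambda>S. card (S \<inter> {..<b})) (pmf_of_set (urn_pairs (b + r)))"

lemma urn_pairs_split:
  assumes "S \<in> urn_pairs (b + r)"
  shows "card (S \<inter> {..<b}) \<le> b" and "card (S \<inter> {..<b}) \<le> 2"
    and "2 \<le> r + card (S \<inter> {..<b})"
    and "card (S - {..<b}) = 2 - card (S \<inter> {..<b})"
proof -
  have S: "S \<subseteq> {0..<b + r}" "card S = 2" "finite S"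
    using assms unfolding urn_pairs_def by (auto intro: finite_subset)
  show "card (S \<inter> {..<b}) \<le> b" using card_mono[of "{..<b}" "S \<inter> {..<b}"] by auto
  show "card (S \<inter> {..<b}) \<le> 2" using card_mono[of S "S \<inter> {..<b}"] S by auto
  show diff: "card (S - {..<b}) = 2 - card (S \<inter> {..<b})"
    using S by (simp add: card_Diff_subset_Int)
  have "S - {..<b} \<subseteq> {b..<b + r}" using S by auto
  then have "card (S - {..<b}) \<le> r" using card_mono[of "{b..<b + r}"] by fastforce
  then show "2 \<le> r + card (S \<inter> {..<b})" using diff by linarith
qed

lemma black_drawn_support:
  assumes "2 \<le> b + r" and "t \<in> set_pmf (black_drawn b r)"
  shows "t \<le> b" and "t \<le> 2" and "2 \<le> r + t"
proof -
  have "urn_pairs (b + r) \<noteq> {}" "finite (urn_pairs (b + r))"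
    using subsets_of_size(1) subsets_of_size(3)[OF assms(1)] unfolding urn_pairs_def by auto
  then obtain S where S: "S \<in> urn_pairs (b + r)" and t: "t = card (S \<inter> {..<b})"
    using assms(2) unfolding black_drawn_def by auto
  show "t \<le> b" "t \<le> 2" "2 \<le> r + t" using urn_pairs_split[OF S] t by auto
qed

lemma pmf_black_drawn:
  assumes "2 \<le> b + r" and "t \<le> 2"
  shows "pmf (black_drawn b r) t = real ((b choose t) * (r choose (2 - t))) / real ((b + r) choose 2)"
  using pmf_hypergeometric[OF assms] unfolding black_drawn_def urn_pairs_def .

(* A step with at least two balls present is determined by the number t of black balls
   drawn: t black balls leave, and 2 - t red balls are replaced by a single red one. *)
lemma urn_step_via_black_drawn:
  assumes "2 \<le> b + r"
  shows "urn_step (b, r) = map_pmf (\<lambda>t. (b - t, r + t - 1)) (black_drawn b r)"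
proof -
  have ne: "urn_pairs (b + r) \<noteq> {}" and fin: "finite (urn_pairs (b + r))"
    using subsets_of_size(1) subsets_of_size(3)[OF assms] unfolding urn_pairs_def by auto
  have "(b - card (S \<inter> {..<b}), r - card (S - {..<b}) + 1)
      = (b - card (S \<inter> {..<b}), r + card (S \<inter> {..<b}) - 1)" if "S \<in> urn_pairs (b + r)" for S
    using urn_pairs_split[OF that] by auto
  then show ?thesis
    using assms unfolding urn_step_def black_drawn_def map_pmf_comp
    by (auto simp: set_pmf_of_set[OF ne fin] intro!: map_pmf_cong)
qed

lemma red_step_support:
  assumes "2 \<le> b + r" and "s \<in> set_pmf (map_pmf snd (urn_step (b, r)))"
  shows "1 \<le> s" and "s \<le> r + 1" and "r \<le> s + 1"
proof -
  obtain t where t: "t \<in> set_pmf (black_drawn b r)" and s: "s = r + t - 1"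
    using assms unfolding urn_step_via_black_drawn[OF assms(1)] by auto
  show "1 \<le> s" "s \<le> r + 1" "r \<le> s + 1"
    using black_drawn_support[OF assms(1) t] s by auto
qed

lemma pmf_red_step:
  assumes "2 \<le> b + r" and "t \<le> 2" and "2 \<le> r + t"
  shows "pmf (map_pmf snd (urn_step (b, r))) (r + t - 1)
         = real ((b choose t) * (r choose (2 - t))) / real ((b + r) choose 2)"
proof -
  have "(\<lambda>t'. r + t' - 1) -` {r + t - 1} = {t}" using assms(3) by auto
  then show ?thesis
    unfolding urn_step_via_black_drawn[OF assms(1)] map_pmf_comp
    by (simp add: pmf_map measure_pmf_single pmf_black_drawn[OF assms(1,2)])
qed

(* Each step with balls present removes exactly one ball. *)
lemma urn_state_total:
  assumes "k \<le> n" and "x \<in> set_pmf (urn_state n k)"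
  shows "fst x + snd x = n - k"
  using assms
proof (induction k arbitrary: x)
  case 0
  then show ?case by simp
next
  case (Suc k)
  then obtain b r where br: "(b, r) \<in> set_pmf (urn_state n k)" and x: "x \<in> set_pmf (urn_step (b, r))"
    by auto
  have total: "b + r = n - k" using Suc.IH[OF _ br] Suc.prems(1) by simp
  show ?case
  proof (cases "2 \<le> b + r")
    case True
    then obtain t where "t \<in> set_pmf (black_drawn b r)" and "x = (b - t, r + t - 1)"
      using x unfolding urn_step_via_black_drawn[OF True] by auto
    then show ?thesis using black_drawn_support[OF True] total by fastforce
  next
    case False
    then show ?thesis using x total Suc.prems(1) by (simp add: urn_step_def)
  qed
qed

lemma urn_U_support:
  assumes "k \<le> n" and "r \<in> set_pmf (urn_U n k)"
  shows "r \<le> n - k"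
  using assms urn_state_total unfolding urn_U_def by fastforce

(* Since the number of black balls is determined by the red count, U is a Markov chain. *)
lemma urn_U_Suc:
  assumes "k \<le> n"
  shows "urn_U n (Suc k) = bind_pmf (urn_U n k) (\<lambda>r. map_pmf snd (urn_step (n - k - r, r)))"
proof -
  have state: "urn_state n k = map_pmf (\<lambda>r. (n - k - r, r)) (urn_U n k)"
    unfolding urn_U_def map_pmf_comp
    by (rule sym, rule map_pmf_idI) (use urn_state_total[OF assms] in force)
  show ?thesis
    unfolding urn_U_def urn_state.simps map_bind_pmf
    by (subst state) (simp add: bind_map_pmf urn_U_def)
qed

(* One transition of the chain, weighted by the current distribution; the weight
   vanishes off the support, where the urn would not contain n - k balls. *)
lemma urn_U_transition:
  assumes "Suc k < n" and "t \<le> 2" and "2 \<le> r + t"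
  shows "pmf (map_pmf snd (urn_step (n - k - r, r))) (r + t - 1) * pmf (urn_U n k) r
       = real (((n - k - r) choose t) * (r choose (2 - t))) / real ((n - k) choose 2) * pmf (urn_U n k) r"
proof (cases "r \<in> set_pmf (urn_U n k)")
  case True
  then have "r \<le> n - k" using urn_U_support assms(1) by simp
  then show ?thesis
    using pmf_red_step[of "n - k - r" r t] assms by simp
next
  case False
  then show ?thesis by (simp add: set_pmf_eq)
qed

(* Forward equation of the chain: the red count s can only be reached from s + 1
   (two red balls drawn), s (one of each) or s - 1 (two black balls drawn). *)
lemma pmf_urn_U_Suc:
  assumes "Suc k < n" and "1 \<le> s"
  shows "pmf (urn_U n (Suc k)) s =
    (pmf (urn_U n k) (s + 1) * real ((s + 1) choose 2)
     + pmf (urn_U n k) s * real ((n - k - s) * s)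
     + pmf (urn_U n k) (s - 1) * real ((n - k - (s - 1)) choose 2)) / real ((n - k) choose 2)"
proof -
  let ?T = "\<lambda>r. pmf (map_pmf snd (urn_step (n - k - r, r))) s"
  have "pmf (urn_U n (Suc k)) s = (\<Sum>r\<in>{s + 1, s, s - 1}. ?T r * pmf (urn_U n k) r)"
    unfolding urn_U_Suc[OF less_imp_le[OF Suc_lessD[OF assms(1)]]] pmf_bind
  proof (intro integral_measure_pmf_real)
    fix r assume r: "r \<in> set_pmf (urn_U n k)" and "?T r \<noteq> 0"
    then have "s \<in> set_pmf (map_pmf snd (urn_step (n - k - r, r)))" by (simp add: set_pmf_eq)
    moreover have "2 \<le> n - k - r + r" using urn_U_support[OF _ r] assms(1) by simp
    ultimately have "r \<le> s + 1" "s \<le> r + 1" using red_step_support by blast+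
    then show "r \<in> {s + 1, s, s - 1}" by auto
  qed auto
  also have "\<dots> = ?T (s + 1) * pmf (urn_U n k) (s + 1) + ?T s * pmf (urn_U n k) s
                  + ?T (s - 1) * pmf (urn_U n k) (s - 1)"
    using assms(2) by (simp add: algebra_simps)
  also have "\<dots> = real (((n - k - (s + 1)) choose 0) * ((s + 1) choose 2)) / real ((n - k) choose 2) * pmf (urn_U n k) (s + 1)
      + real (((n - k - s) choose 1) * (s choose 1)) / real ((n - k) choose 2) * pmf (urn_U n k) s
      + real (((n - k - (s - 1)) choose 2) * ((s - 1) choose 0)) / real ((n - k) choose 2) * pmf (urn_U n k) (s - 1)"
    using urn_U_transition[OF assms(1), of 0 "s + 1"] urn_U_transition[OF assms(1), of 1 s]
      urn_U_transition[OF assms(1), of 2 "s - 1"] assms(2) by simp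
  finally show ?thesis by (simp add: add_divide_distrib ac_simps)
qed

lemma pmf_urn_U_Suc_zero:
  assumes "Suc k < n"
  shows "pmf (urn_U n (Suc k)) 0 = 0"
proof -
  have "0 \<notin> set_pmf (map_pmf snd (urn_step (n - k - r, r)))" if "r \<in> set_pmf (urn_U n k)" for r
    using red_step_support[of "n - k - r" r 0] urn_U_support[OF _ that] assms by fastforce
  then have "0 \<notin> set_pmf (urn_U n (Suc k))"
    unfolding urn_U_Suc[OF less_imp_le[OF Suc_lessD[OF assms]]] set_bind_pmf by blast
  then show ?thesis by (simp add: pmf_eq_0_set_pmf)
qed

(* Numerator of the claimed law of U_k for k = a + 1 and m = n - k remaining balls. *)
definition red_weight :: "nat \<Rightarrow> nat \<Rightarrow> nat \<Rightarrow> nat" where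
  "red_weight a m s = (if s = 0 then 0 else (a choose (s - 1)) * (m choose s))"

lemma double_choose_two: "2 * (x choose 2) = x * (x - 1)"
  using binomial_absorption[of 1 x] by (simp add: numeral_2_eq_2)

lemma choose_Suc_Suc_expand:
  assumes "1 \<le> s"
  shows "Suc (Suc a) choose s
         = (a choose s) + 2 * (a choose (s - 1)) + (if s = 1 then 0 else a choose (s - 2))"
proof -
  obtain j where s: "s = Suc j" using assms by (cases s) auto
  show ?thesis
  proof (cases j)
    case 0
    then show ?thesis using s by simp
  next
    case (Suc i)
    then show ?thesis using s by simp
  qed
qed

(* The terms of the forward equation coming from s + 1 and from s - 1 red balls,
   both rewritten in terms of C(m, s) by absorption. *)
lemma binomial_from_above: "2 * (((s + 1) choose 2) * (m choose (s + 1))) = s * (m - s) * (m choose s)"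
proof -
  have "2 * (((s + 1) choose 2) * (m choose (s + 1))) = s * ((s + 1) * (m choose (s + 1)))"
    unfolding mult.assoc[symmetric] double_choose_two by simp
  also have "(s + 1) * (m choose (s + 1)) = (m - s) * (m choose s)"
    using binomial_absorption[of s m] binomial_absorb_comp[of m s] by simp
  finally show ?thesis by (simp only: mult.assoc)
qed

lemma binomial_from_below:
  assumes "1 \<le> s"
  shows "2 * (((m - (s - 1)) choose 2) * (m choose (s - 1))) = s * (m - s) * (m choose s)"
proof -
  have "2 * (((m - (s - 1)) choose 2) * (m choose (s - 1)))
      = (m - s) * ((m - (s - 1)) * (m choose (s - 1)))"
    using double_choose_two[of "m - (s - 1)"] assms by (simp add: mult_ac)
  also have "(m - (s - 1)) * (m choose (s - 1)) = s * (m choose s)"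
    using binomial_absorption[of "s - 1" m] binomial_absorb_comp[of m "s - 1"] assms by simp
  finally show ?thesis by (simp only: mult_ac)
qed

(* The forward equation for the numerators: every term is a multiple of
   s (m - s) C(m, s), and the multipliers add up by choose_Suc_Suc_expand. *)
lemma red_weight_recurrence:
  assumes "1 \<le> s"
  shows "2 * (red_weight a m (s + 1) * ((s + 1) choose 2) + red_weight a m s * ((m - s) * s)
              + red_weight a m (s - 1) * ((m - (s - 1)) choose 2))
         = (a + 2) * m * red_weight (a + 1) (m - 1) s"
proof -
  define c where "c = s * (m - s) * (m choose s)"
  note from_above = binomial_from_above[of s m, folded c_def]
    and from_below = binomial_from_below[OF assms, of m, folded c_def]
  have "red_weight (a + 1) (m - 1) s = ((a + 1) choose (s - 1)) * ((m - 1) choose s)"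
    using assms by (simp add: red_weight_def)
  then have "(a + 2) * m * red_weight (a + 1) (m - 1) s
      = ((a + 2) * ((a + 1) choose (s - 1))) * (m * ((m - 1) choose s))"
    by (simp only: mult_ac)
  also have "\<dots> = (s * ((a + 2) choose s)) * ((m - s) * (m choose s))"
    using binomial_absorption[of "s - 1" "a + 2"] binomial_absorb_comp[of m s] assms by simp
  also have "\<dots> = c * (Suc (Suc a) choose s)" unfolding c_def by simp
  finally have rhs: "(a + 2) * m * red_weight (a + 1) (m - 1) s = c * (Suc (Suc a) choose s)" .
  have "2 * (red_weight a m (s + 1) * ((s + 1) choose 2))
      = (a choose s) * (2 * (((s + 1) choose 2) * (m choose (s + 1))))"
    by (simp add: red_weight_def)
  then have above: "2 * (red_weight a m (s + 1) * ((s + 1) choose 2)) = (a choose s) * c"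
    unfolding from_above .
  have middle: "2 * (red_weight a m s * ((m - s) * s)) = 2 * (a choose (s - 1)) * c"
    using assms unfolding red_weight_def c_def by (simp add: mult_ac)
  have below: "2 * (red_weight a m (s - 1) * ((m - (s - 1)) choose 2))
      = (if s = 1 then 0 else a choose (s - 2)) * c"
  proof (cases "s = 1")
    case False
    then have "2 * (red_weight a m (s - 1) * ((m - (s - 1)) choose 2))
        = (a choose (s - 2)) * (2 * (((m - (s - 1)) choose 2) * (m choose (s - 1))))"
      using assms False by (simp add: red_weight_def diff_diff_add numeral_2_eq_2 algebra_simps)
    then show ?thesis using False unfolding from_below by simp
  qed (simp add: red_weight_def)
  show ?thesis
    unfolding distrib_left above middle below rhs choose_Suc_Suc_expand[OF assms]
    by (simp add: algebra_simps)
qed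

definition red_law :: "nat \<Rightarrow> nat \<Rightarrow> nat \<Rightarrow> real" where
  "red_law n k s = real (red_weight (k - 1) (n - k) s) / real ((n - 1) choose k)"

lemma red_law_recurrence:
  assumes "1 \<le> k" and "Suc k < n" and "1 \<le> s"
  shows "(red_law n k (s + 1) * real ((s + 1) choose 2) + red_law n k s * real ((n - k - s) * s)
          + red_law n k (s - 1) * real ((n - k - (s - 1)) choose 2)) / real ((n - k) choose 2)
         = red_law n (Suc k) s"
proof -
  define a m where "a = k - 1" and "m = n - k"
  define C0 C1 where "C0 = (a + m) choose (a + 1)" and "C1 = (a + m) choose (a + 2)"
  have m2: "2 \<le> m" and nk: "n - k = m" using assms unfolding m_def by auto
  have law_k: "red_law n k r = real (red_weight a m r) / real C0" for r
    using assms unfolding red_law_def a_def m_def C0_def by simp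
  have law_Suc_k: "red_law n (Suc k) r = real (red_weight (a + 1) (m - 1) r) / real C1" for r
    using assms unfolding red_law_def a_def m_def C1_def by (simp add: numeral_2_eq_2)
  have "C0 > 0" "C1 > 0" using m2 unfolding C0_def C1_def by simp_all
  have C1: "(a + 2) * C1 = (m - 1) * C0"
    using binomial_absorption[of "a + 1" "a + m"] binomial_absorb_comp[of "a + m" "a + 1"]
    unfolding C0_def C1_def by (simp add: numeral_2_eq_2)
  define N where "N = red_weight a m (s + 1) * ((s + 1) choose 2) + red_weight a m s * ((m - s) * s)
                      + red_weight a m (s - 1) * ((m - (s - 1)) choose 2)"
  have "(red_law n k (s + 1) * real ((s + 1) choose 2) + red_law n k s * real ((n - k - s) * s)
          + red_law n k (s - 1) * real ((n - k - (s - 1)) choose 2)) / real ((n - k) choose 2)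
      = real (2 * N) / (real C0 * real (2 * (m choose 2)))"
    using \<open>C0 > 0\<close> m2 unfolding law_k N_def nk by (simp add: field_simps)
  also have "\<dots> = real ((a + 2) * m * red_weight (a + 1) (m - 1) s) / (real C0 * real (m * (m - 1)))"
    unfolding N_def red_weight_recurrence[OF assms(3)] double_choose_two ..
  also have "\<dots> = red_law n (Suc k) s"
  proof -
    let ?w = "red_weight (a + 1) (m - 1) s"
    have "(a + 2) * m * ?w * C1 = ?w * m * ((a + 2) * C1)" by (simp only: mult_ac)
    also have "\<dots> = ?w * (C0 * (m * (m - 1)))" unfolding C1 by (simp only: mult_ac)
    finally have "real ((a + 2) * m * ?w) * real C1 = real ?w * (real C0 * real (m * (m - 1)))"
      by (simp only: of_nat_mult[symmetric])
    then show ?thesis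
      unfolding law_Suc_k using m2 \<open>C0 > 0\<close> \<open>C1 > 0\<close> by (simp add: frac_eq_eq del: of_nat_mult)
  qed
  finally show ?thesis .
qed

(* The law of U_k, by induction on k; the first step is itself an instance of the
   forward equation, starting from U_0 = 0. *)
lemma urn_U_law:
  assumes "1 \<le> k" and "k < n"
  shows "pmf (urn_U n k) s = red_law n k s"
  using assms
proof (induction k arbitrary: s rule: nat_induct_at_least)
  case base
  have U0: "pmf (urn_U n 0) r = (if r = 0 then 1 else 0)" for r
    by (simp add: urn_U_def)
  show ?case
  proof (cases "s = 0")
    case True
    then show ?thesis using pmf_urn_U_Suc_zero[of 0 n] base by (simp add: red_law_def red_weight_def)
  next
    case False
    have "0 < n choose 2" using base by simp
    then show ?thesis
      using pmf_urn_U_Suc[of 0 n s] base False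
      by (cases "s = 1") (auto simp: U0 red_law_def red_weight_def binomial_eq_0 of_nat_diff)
  qed
next
  case (Suc k)
  show ?case
  proof (cases "s = 0")
    case True
    then show ?thesis using pmf_urn_U_Suc_zero[OF Suc.prems] by (simp add: red_law_def red_weight_def)
  next
    case False
    then show ?thesis
      using pmf_urn_U_Suc[OF Suc.prems, of s] red_law_recurrence[OF Suc.hyps(1) Suc.prems, of s]
        Suc.IH Suc.prems by simp
  qed
qed

lemma red_law_hypergeometric:
  assumes "1 \<le> k" and "k < n"
  shows "red_law n k (Suc i) = (if i \<le> n - k - 1 then
           real ((k - 1) choose i) * real ((n - k) choose (n - k - 1 - i)) / real ((n - 1) choose (n - k - 1))
         else 0)"
proof -
  have "(n - 1) choose k = (n - 1) choose (n - k - 1)"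
    using binomial_symmetric[of k "n - 1"] assms by (simp add: diff_diff_add add.commute)
  moreover have "(n - k) choose Suc i = (n - k) choose (n - k - 1 - i)" if "i \<le> n - k - 1"
    using binomial_symmetric[of "Suc i" "n - k"] that assms by simp
  moreover have "(n - k) choose Suc i = 0" if "\<not> i \<le> n - k - 1"
    using that by (simp add: binomial_eq_0)
  ultimately show ?thesis by (simp add: red_law_def red_weight_def)
qed

theorem mainTheorem9:
  fixes n k :: nat
  assumes "n \<ge> 2" and "1 \<le> k" and "k \<le> n - 1"
  shows "\<forall>j::int. measure_pmf.prob (urn_U n k) {u. int u - 1 = j} =
           (if 0 \<le> j \<and> j \<le> int (n - k - 1) then
              real ((k - 1) choose nat j) * real ((n - k) choose (n - k - 1 - nat j))
                / real ((n - 1) choose (n - k - 1))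
            else 0)"
proof (intro allI, goal_cases)
  case (1 j)
  have "k < n" using assms by simp
  note law = urn_U_law[OF assms(2) this] red_law_hypergeometric[OF assms(2) this]
  show ?case
  proof (cases "0 \<le> j")
    case True
    then have "{u. int u - 1 = j} = {Suc (nat j)}" by auto
    then show ?thesis using True law by (simp add: measure_pmf_single nat_le_iff)
  next
    case False
    then have "{u. int u - 1 = j} = (if j = -1 then {0} else {})" by auto
    then show ?thesis using False law by (simp add: measure_pmf_single red_law_def red_weight_def)
  qed
qed

end
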